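(* Let $X$ be a locally compact space and $f\colon X\to\mathbb{C}$. The following are equivalent: (i) $f\in C_c(X)$; (ii) $f^{-1}(\mathbb{C}^* )$ is relatively quasi-compact, and for every filter $\mathcal{F}$ on $X$ such that the image filter $i(\mathcal{F})$ converges in $\mathcal{H}X$ to some $S\in\mathcal{H}X$ (where $i\colon X\to\mathcal{H}X$, $x\mapsto\{x\}$), one has $\lim_{\mathcal{F}}f=\sum_{s\in S}f(s)$.
   Context: Quasi-compact: every open cover has a finite subcover; relatively quasi-compact: contained in a quasi-compact set; locally compact: every point has a quasi-compact Hausdorff neighbourhood (the space need not be Hausdorff). $C_c(X)$ is the linear span of the functions $g\colon X\to\mathbb{C}$ for which there is an open Hausdorff $V\subset X$ with $g|_V\in C_c(V)$ and $g=0$ outside $V$. $\mathcal{H}X$ is the set of nonempty $S\subset X$ such that every finite family of open sets each meeting $S$ has nonempty intersection, with the topology generated by $\{S:S\cap V\neq\emptyset\}$ ($V$ open) and $\{S:S\cap Q=\emptyset\}$ ($Q$ quasi-compact). *)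

theory Defs
  imports "HOL-Analysis.Analysis"
begin

text \<open>The space X is the type 'a with its topology (class topological_space).
  Isabelle's compact is defined by open covers, i.e. it is quasi-compactness.\<close>

definition rel_qcompact :: "'a::topological_space set \<Rightarrow> bool" where
  "rel_qcompact A \<longleftrightarrow> (\<exists>K. compact K \<and> A \<subseteq> K)"

definition locally_qc_Hausdorff :: "'a::topological_space itself \<Rightarrow> bool" where
  "locally_qc_Hausdorff TYPE('a) \<longleftrightarrow>
     (\<forall>x::'a. \<exists>U K. open U \<and> x \<in> U \<and> U \<subseteq> K \<and> compact K
        \<and> Hausdorff_space (subtopology euclidean K))"

text \<open>Generators of C_c(X): g vanishes outside an open Hausdorff V and g restricted to V
  lies in C_c(V) (continuous, with support quasi-compact in V).\<close>
definition Cc_generator :: "('a::topological_space \<Rightarrow> complex) \<Rightarrow> bool" where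
  "Cc_generator g \<longleftrightarrow> (\<exists>V. open V \<and> Hausdorff_space (subtopology euclidean V)
      \<and> continuous_on V g
      \<and> compactin (subtopology euclidean V)
           ((subtopology euclidean V) closure_of {x\<in>V. g x \<noteq> 0})
      \<and> (\<forall>x. x \<notin> V \<longrightarrow> g x = 0))"

definition Cc :: "('a::topological_space \<Rightarrow> complex) set" where
  "Cc = {f. \<exists>(n::nat) (c::nat \<Rightarrow> complex) g. (\<forall>i<n. Cc_generator (g i))
                 \<and> f = (\<lambda>x. \<Sum>i<n. c i * g i x)}"

definition HX :: "'a::topological_space set set" where
  "HX = {S. S \<noteq> {} \<and> (\<forall>\<U>. finite \<U> \<and> (\<forall>U\<in>\<U>. open U \<and> U \<inter> S \<noteq> {}) \<longrightarrow> \<Inter>\<U> \<noteq> {})}"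

definition HX_topology :: "'a::topological_space set topology" where
  "HX_topology = subtopology
     (topology_generated_by
        ({{S. S \<inter> V \<noteq> {}} | V. open V} \<union> {{S. S \<inter> Q = {}} | Q. compact Q}))
     HX"

end

(*
  (i) implies (ii): condition (ii) is linear, and for each generator g of C_c(X), supported by a
  quasi-compact C inside an open Hausdorff V, it holds because a point S of HX meets V in at most
  one point (two points of S cannot be separated). So the sum over S is either g s for the unique
  s in S and V, and continuity of g at s gives the limit, or it is 0, and then i(F) eventually
  avoids C. The sums are finite since S meets every quasi-compact set in a finite set.

  (ii) implies (i): cover the quasi-compact support of f by finitely many open U_j lying in
  quasi-compact Hausdorff K_j, and shrink the cover to open W_j inside quasi-compact C_j inside U_j.
  For one chart U = U_j, let Omega be the union of the other W_j. Applying (ii) to ultrafilters on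
  U - Omega converging to a point a shows that f is continuous on U - Omega: the limits of
  such an ultrafilter form a point of HX which meets U only in a and misses Omega. Tietze's
  theorem on the compact Hausdorff K_j then gives a generator g agreeing with f outside Omega,
  and f - g satisfies (ii) with support in the union of the other C_j; induct on the charts.
*)

theory Submission
  imports Defs
begin


lemma Hausdorff_space_subtopology_subset:
  assumes "Hausdorff_space (subtopology X K)" "U \<subseteq> K"
  shows "Hausdorff_space (subtopology X U)"
proof -
  have "subtopology (subtopology X K) U = subtopology X U"
    using assms(2) by (simp add: subtopology_subtopology Int_absorb1)
  then show ?thesis
    using Hausdorff_space_subtopology[OF assms(1)] by metis
qed

lemma locally_qc_HausdorffE:
  assumes "locally_qc_Hausdorff TYPE('a::topological_space)"
  obtains U K :: "'a::topological_space \<Rightarrow> 'a set"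
  where "\<And>x. open (U x)" "\<And>x. x \<in> U x" "\<And>x. U x \<subseteq> K x"
    "\<And>x. compact (K x)" "\<And>x. Hausdorff_space (top_of_set (K x))"
proof -
  have "\<forall>x::'a. \<exists>U K. open U \<and> x \<in> U \<and> U \<subseteq> K \<and> compact K \<and> Hausdorff_space (top_of_set K)"
    using assms unfolding locally_qc_Hausdorff_def by blast
  then show ?thesis
    using that by metis
qed

lemma compact_neighbourhood_within_open:
  assumes "open U" "U \<subseteq> K" "compact K" "Hausdorff_space (top_of_set K)" "y \<in> U"
  shows "\<exists>N L. open N \<and> y \<in> N \<and> N \<subseteq> L \<and> L \<subseteq> U \<and> compact L"
proof -
  have "locally_compact_space (top_of_set K)"
    using assms(3) by (simp add: compact_imp_locally_compact_space compact_space_subtopology)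
  then have "neighbourhood_base_of (compactin (top_of_set K)) (top_of_set K)"
    using assms(4) locally_compact_space_neighbourhood_base by blast
  moreover have "openin (top_of_set K) U"
    using openin_open_Int[OF assms(1), of K] assms(2) by (simp add: Int_absorb1)
  ultimately obtain N L where N: "openin (top_of_set K) N" "compactin (top_of_set K) L"
    "y \<in> N" "N \<subseteq> L" "L \<subseteq> U"
    using assms(5) unfolding neighbourhood_base_of by meson
  have "openin (top_of_set U) N"
    using N(1,4,5) assms(2) openin_subset_trans by blast
  then have "open N"
    using assms(1) openin_open_trans by blast
  moreover have "compact L"
    using N(2) by (simp add: compactin_subtopology)
  ultimately have "open N \<and> y \<in> N \<and> N \<subseteq> L \<and> L \<subseteq> U \<and> compact L"
    using N(3-5) by simp
  then show ?thesis
    by blast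
qed

lemma compact_shrink_open_cover:
  assumes "compact M" "M \<subseteq> \<Union>(U ` I)"
    and "\<And>i y. i \<in> I \<Longrightarrow> y \<in> U i \<Longrightarrow>
           \<exists>N L. open N \<and> y \<in> N \<and> N \<subseteq> L \<and> L \<subseteq> U i \<and> compact L"
  obtains W C where "\<And>i. open (W i)" "\<And>i. W i \<subseteq> C i" "\<And>i. C i \<subseteq> U i"
    "\<And>i. compact (C i)" "M \<subseteq> \<Union>(W ` I)"
proof -
  have "\<forall>y\<in>M. \<exists>i. i \<in> I \<and> (\<exists>N L. open N \<and> y \<in> N \<and> N \<subseteq> L \<and> L \<subseteq> U i \<and> compact L)"
  proof
    fix y assume "y \<in> M"
    then obtain i where "i \<in> I" "y \<in> U i" using assms(2) by blast
    moreover obtain N L where "open N" "y \<in> N" "N \<subseteq> L" "L \<subseteq> U i" "compact L"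
      using assms(3) \<open>i \<in> I\<close> \<open>y \<in> U i\<close> by meson
    ultimately show "\<exists>i. i \<in> I \<and> (\<exists>N L. open N \<and> y \<in> N \<and> N \<subseteq> L \<and> L \<subseteq> U i \<and> compact L)"
      by blast
  qed
  then obtain \<iota> where "\<forall>y\<in>M. \<iota> y \<in> I \<and>
      (\<exists>N L. open N \<and> y \<in> N \<and> N \<subseteq> L \<and> L \<subseteq> U (\<iota> y) \<and> compact L)"
    by (metis bchoice)
  then obtain N where "\<forall>y\<in>M. \<iota> y \<in> I \<and> open (N y) \<and> y \<in> N y \<and>
      (\<exists>L. N y \<subseteq> L \<and> L \<subseteq> U (\<iota> y) \<and> compact L)"
    by (metis bchoice)
  then obtain L where NL: "\<And>y. y \<in> M \<Longrightarrow> \<iota> y \<in> I \<and> open (N y) \<and> y \<in> N y \<and>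
      N y \<subseteq> L y \<and> L y \<subseteq> U (\<iota> y) \<and> compact (L y)"
    by (metis bchoice)
  obtain T where T: "T \<subseteq> M" "finite T" "M \<subseteq> \<Union>(N ` T)"
    using compactE_image[OF assms(1), of M N] NL by blast
  define W where "W i = \<Union>(N ` {y\<in>T. \<iota> y = i})" for i
  define C where "C i = \<Union>(L ` {y\<in>T. \<iota> y = i})" for i
  show ?thesis
  proof
    show "open (W i)" for i
      unfolding W_def using NL T(1) by (intro open_UN) auto
    show "W i \<subseteq> C i" "C i \<subseteq> U i" for i
      unfolding W_def C_def using NL T(1) by fastforce+
    show "compact (C i)" for i
      unfolding C_def using NL T by (intro compact_UN) auto
    show "M \<subseteq> \<Union>(W ` I)"
    proof
      fix x assume "x \<in> M"
      then obtain y where "y \<in> T" "x \<in> N y" using T(3) by blast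
      then have "\<iota> y \<in> I" "x \<in> W (\<iota> y)" using NL T(1) unfolding W_def by auto
      then show "x \<in> \<Union>(W ` I)" by blast
    qed
  qed
qed

lemma Tietze_extension_complex:
  fixes f :: "'a \<Rightarrow> complex"
  assumes "normal_space X" "closedin X S" "continuous_map (subtopology X S) euclidean f"
  obtains g where "continuous_map X euclidean g" "\<And>x. x \<in> S \<Longrightarrow> g x = f x"
proof -
  have "continuous_map (subtopology X S) euclideanreal (\<lambda>x. Re (f x))"
    "continuous_map (subtopology X S) euclideanreal (\<lambda>x. Im (f x))"
    using assms(3) by (auto simp: continuous_map_atin tendsto_Re tendsto_Im)
  then obtain g1 g2 where g: "continuous_map X euclideanreal g1" "continuous_map X euclideanreal g2"
    "\<And>x. x \<in> S \<Longrightarrow> g1 x = Re (f x)" "\<And>x. x \<in> S \<Longrightarrow> g2 x = Im (f x)"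
    using Tietze_extension_realinterval[OF assms(1,2) is_interval_univ UNIV_not_empty]
    by (metis subset_UNIV)
  show ?thesis
  proof
    show "continuous_map X euclidean (\<lambda>x. Complex (g1 x) (g2 x))"
      using g(1,2) by (auto simp: continuous_map_atin tendsto_Complex)
    show "Complex (g1 x) (g2 x) = f x" if "x \<in> S" for x
      using g(3,4) that by (simp add: complex_eq_iff)
  qed
qed

lemma limitin_topology_generated_by:
  "limitin (topology_generated_by \<B>) f l F \<longleftrightarrow>
     l \<in> \<Union>\<B> \<and> (\<forall>B\<in>\<B>. l \<in> B \<longrightarrow> eventually (\<lambda>x. f x \<in> B) F)"
proof
  assume "limitin (topology_generated_by \<B>) f l F"
  then show "l \<in> \<Union>\<B> \<and> (\<forall>B\<in>\<B>. l \<in> B \<longrightarrow> eventually (\<lambda>x. f x \<in> B) F)"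
    by (auto simp: limitin_def topology_generated_by_Basis)
next
  assume l: "l \<in> \<Union>\<B> \<and> (\<forall>B\<in>\<B>. l \<in> B \<longrightarrow> eventually (\<lambda>x. f x \<in> B) F)"
  have "eventually (\<lambda>x. f x \<in> U) F" if "generate_topology_on \<B> U" "l \<in> U" for U
    using that
  proof (induction rule: generate_topology_on.induct)
    case (Int a b)
    then show ?case by (simp add: eventually_conj)
  next
    case (UN K)
    then obtain k where "k \<in> K" "l \<in> k" by blast
    with UN.IH have "eventually (\<lambda>x. f x \<in> k) F" by blast
    then show ?case
      by (rule eventually_mono) (use \<open>k \<in> K\<close> in blast)
  qed (use l in auto)
  with l show "limitin (topology_generated_by \<B>) f l F"
    by (simp add: limitin_def openin_topology_generated_by_iff)
qed

section \<open>Ultrafilters\<close>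

definition ultrafilter :: "'a filter \<Rightarrow> bool" where
  "ultrafilter G \<longleftrightarrow> G \<noteq> bot \<and> (\<forall>P. eventually P G \<or> eventually (\<lambda>x. \<not> P x) G)"

lemma ex_ultrafilter_le:
  fixes F :: "'a filter"
  assumes "F \<noteq> bot"
  obtains G where "ultrafilter G" "G \<le> F"
proof -
  let ?R = "{(b, a). a \<noteq> bot \<and> a \<le> b \<and> b \<le> F}"
  have field_R: "Field ?R = {G. G \<noteq> bot \<and> G \<le> F}"
    by (auto simp: Field_def bot_unique)
  have "\<exists>m\<in>Field ?R. \<forall>a\<in>Field ?R. (m, a) \<in> ?R \<longrightarrow> a = m"
  proof (rule Zorns_po_lemma)
    show "Partial_order ?R"
      by (auto simp: partial_order_on_def preorder_on_def
          antisym_def refl_on_def trans_def Field_def bot_unique)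
    show "\<exists>u\<in>Field ?R. \<forall>a\<in>C. (a, u) \<in> ?R" if C: "C \<in> Chains ?R" for C
    proof (cases "C = {}")
      case True
      then show ?thesis using assms field_R by auto
    next
      case False
      have "Inf C = bot \<longleftrightarrow> (\<exists>x\<in>C. x = bot)"
        unfolding trivial_limit_def using C False
        by (intro eventually_Inf_base) (auto simp: Chains_def)
      then have "Inf C \<noteq> bot" using C by (auto simp: Chains_def)
      moreover from False obtain x where "x \<in> C" by auto
      then have "Inf C \<le> F" using C by (auto intro!: Inf_lower2[of x] simp: Chains_def)
      ultimately show ?thesis using C
        by (intro bexI[of _ "Inf C"]) (auto intro: Inf_lower simp: Chains_def field_R)
    qed
  qed
  then obtain U where U: "U \<noteq> bot" "U \<le> F" "\<And>G. G \<noteq> bot \<Longrightarrow> G \<le> U \<Longrightarrow> G = U"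
    unfolding field_R by auto
  have "ultrafilter U"
    unfolding ultrafilter_def
  proof (intro conjI allI U(1) disjCI)
    fix P assume "\<not> eventually (\<lambda>x. \<not> P x) U"
    then have "inf U (principal {x. P x}) \<noteq> bot"
      by (simp add: trivial_limit_def eventually_inf_principal)
    then have "inf U (principal {x. P x}) = U" by (rule U(3)) simp
    moreover have "eventually P (inf U (principal {x. P x}))"
      by (simp add: eventually_inf_principal)
    ultimately show "eventually P U" by simp
  qed
  with U(2) show ?thesis using that by blast
qed

lemma tendsto_ultrafilterI:
  assumes "\<And>G. ultrafilter G \<Longrightarrow> G \<le> F \<Longrightarrow> (f \<longlongrightarrow> l) G"
  shows "(f \<longlongrightarrow> l) F"
proof (rule topological_tendstoI)
  fix B assume B: "open B" "l \<in> B"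
  show "eventually (\<lambda>x. f x \<in> B) F"
  proof (rule ccontr)
    assume "\<not> eventually (\<lambda>x. f x \<in> B) F"
    then have "inf F (principal {x. f x \<notin> B}) \<noteq> bot"
      by (simp add: trivial_limit_def eventually_inf_principal)
    then obtain G where G: "ultrafilter G" "G \<le> inf F (principal {x. f x \<notin> B})"
      by (rule ex_ultrafilter_le)
    then have "eventually (\<lambda>x. f x \<notin> B) G"
      by (simp add: le_principal)
    moreover have "eventually (\<lambda>x. f x \<in> B) G"
      using assms[OF G(1)] G(2) B topological_tendstoD by fastforce
    ultimately have "eventually (\<lambda>x. False) G"
      by (rule eventually_elim2) simp
    with G(1) show False by (simp add: ultrafilter_def)
  qed
qed

lemma ultrafilter_le_nhds_if_compact:
  assumes "ultrafilter G" "compact Q" "eventually (\<lambda>x. x \<in> Q) G"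
  obtains q where "q \<in> Q" "G \<le> nhds q"
proof -
  obtain q where q: "q \<in> Q" "inf (nhds q) G \<noteq> bot"
    using assms unfolding compact_filter ultrafilter_def by blast
  have "G \<le> nhds q"
    unfolding le_nhds
  proof (intro allI impI)
    fix W assume W: "open W \<and> q \<in> W"
    show "eventually (\<lambda>x. x \<in> W) G"
    proof (rule ccontr)
      assume "\<not> eventually (\<lambda>x. x \<in> W) G"
      then have "eventually (\<lambda>x. x \<notin> W) G"
        using assms(1) unfolding ultrafilter_def by blast
      moreover have "eventually (\<lambda>x. x \<in> W) (nhds q)"
        using W eventually_nhds by blast
      ultimately have "eventually (\<lambda>x. False) (inf (nhds q) G)"
        unfolding eventually_inf by blast
      with q(2) show False by (simp add: trivial_limit_def)
    qed
  qed
  with q(1) show ?thesis using that by blast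
qed

section \<open>The space HX\<close>

lemma HX_Inter_nonempty:
  assumes "S \<in> HX" "finite \<U>" "\<And>U. U \<in> \<U> \<Longrightarrow> open U" "\<And>U. U \<in> \<U> \<Longrightarrow> U \<inter> S \<noteq> {}"
  shows "\<Inter>\<U> \<noteq> {}"
  using assms unfolding HX_def by simp

lemma HX_Int_open_Hausdorff_subsingleton:
  assumes "S \<in> HX" "open U" "Hausdorff_space (top_of_set U)" "s \<in> S \<inter> U" "t \<in> S \<inter> U"
  shows "s = t"
proof (rule ccontr)
  assume "s \<noteq> t"
  then obtain A B where AB: "openin (top_of_set U) A" "openin (top_of_set U) B"
    "s \<in> A" "t \<in> B" "disjnt A B"
    using assms(3-5) unfolding Hausdorff_space_def topspace_euclidean_subtopology by (meson IntD2)
  then have "open A" "open B"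
    using assms(2) openin_open_trans by blast+
  with AB(3,4) assms(4,5) have "\<Inter>{A, B} \<noteq> {}"
    by (intro HX_Inter_nonempty[OF assms(1)]) auto
  with AB(5) show False by (simp add: disjnt_def)
qed

lemma finite_HX_Int_compact:
  assumes "locally_qc_Hausdorff TYPE('a::topological_space)" "S \<in> HX" "compact (K::'a set)"
  shows "finite (S \<inter> K)"
proof -
  obtain U L :: "'a \<Rightarrow> 'a set" where UL: "\<And>x. open (U x)" "\<And>x. x \<in> U x" "\<And>x. U x \<subseteq> L x"
    "\<And>x. Hausdorff_space (top_of_set (L x))"
    using locally_qc_HausdorffE[OF assms(1)] by metis
  have U: "\<And>x. open (U x)" "\<And>x. x \<in> U x" "\<And>x. Hausdorff_space (top_of_set (U x))"
    using UL Hausdorff_space_subtopology_subset by blast+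
  obtain T where T: "finite T" "K \<subseteq> \<Union>(U ` T)"
    using compactE_image[OF assms(3), of K U] U(1,2) by (metis UN_I subsetI)
  have "finite (S \<inter> U x)" for x
  proof (cases "S \<inter> U x = {}")
    case False
    then obtain s where "s \<in> S \<inter> U x" by blast
    then have "S \<inter> U x \<subseteq> {s}"
      using HX_Int_open_Hausdorff_subsingleton[OF assms(2) U(1) U(3)] by blast
    then show ?thesis using finite_subset by blast
  qed simp
  with T(1) have "finite (\<Union>x\<in>T. S \<inter> U x)" by (rule finite_UN_I)
  moreover have "S \<inter> K \<subseteq> (\<Union>x\<in>T. S \<inter> U x)" using T(2) by blast
  ultimately show ?thesis using finite_subset by blast
qed

lemma singleton_in_HX: "{x} \<in> HX"
  unfolding HX_def by auto

lemma limitin_HX_topology_singletons_iff: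
  "limitin HX_topology (\<lambda>x. {x}) S F \<longleftrightarrow>
     S \<in> HX \<and> (\<forall>V. open V \<and> S \<inter> V \<noteq> {} \<longrightarrow> eventually (\<lambda>x. x \<in> V) F)
            \<and> (\<forall>Q. compact Q \<and> S \<inter> Q = {} \<longrightarrow> eventually (\<lambda>x. x \<notin> Q) F)"
proof -
  have "S \<in> \<Union>({{T. T \<inter> V \<noteq> {}} | V. open V} \<union> {{T. T \<inter> Q = {}} | Q. compact Q})"
    if "S \<in> HX"
  proof -
    have "S \<inter> UNIV \<noteq> {}"
      using that by (simp add: HX_def)
    then show ?thesis
      by blast
  qed
  then show ?thesis
    unfolding HX_topology_def limitin_subtopology limitin_topology_generated_by
    by (auto simp: singleton_in_HX setcompr_eq_image ball_Un imp_conjL)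
qed

lemma limitin_HX_topology_singletonsD:
  assumes "limitin HX_topology (\<lambda>x. {x}) S F"
  shows "S \<in> HX"
    and "open V \<Longrightarrow> S \<inter> V \<noteq> {} \<Longrightarrow> eventually (\<lambda>x. x \<in> V) F"
    and "compact Q \<Longrightarrow> S \<inter> Q = {} \<Longrightarrow> eventually (\<lambda>x. x \<notin> Q) F"
  using assms by (simp_all add: limitin_HX_topology_singletons_iff)

lemma ultrafilter_limits_in_HX:
  assumes "ultrafilter G" "G \<le> nhds a"
  shows "{s. G \<le> nhds s} \<in> HX" (is "?S \<in> HX")
proof -
  have "\<Inter>\<U> \<noteq> {}" if "finite \<U>" "\<forall>U\<in>\<U>. open U \<and> U \<inter> ?S \<noteq> {}" for \<U>
  proof -
    have "\<forall>U\<in>\<U>. eventually (\<lambda>x. x \<in> U) G"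
      using that(2) unfolding le_nhds by blast
    then have "eventually (\<lambda>x. \<forall>U\<in>\<U>. x \<in> U) G"
      by (rule eventually_ball_finite[OF that(1)])
    then obtain x where "\<forall>U\<in>\<U>. x \<in> U"
      using assms(1) eventually_happens' unfolding ultrafilter_def by blast
    then show ?thesis by blast
  qed
  moreover have "?S \<noteq> {}" using assms(2) by blast
  ultimately show ?thesis unfolding HX_def by simp
qed

lemma ultrafilter_limitin_HX_topology:
  assumes "ultrafilter G" "G \<le> nhds a"
  shows "limitin HX_topology (\<lambda>x. {x}) {s. G \<le> nhds s} G" (is "limitin _ _ ?S _")
  unfolding limitin_HX_topology_singletons_iff
proof (intro conjI allI impI)
  show "?S \<in> HX" by (rule ultrafilter_limits_in_HX[OF assms])
  show "eventually (\<lambda>x. x \<in> V) G" if "open V \<and> ?S \<inter> V \<noteq> {}" for V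
    using that unfolding le_nhds by blast
  show "eventually (\<lambda>x. x \<notin> Q) G" if Q: "compact Q \<and> ?S \<inter> Q = {}" for Q
  proof (rule ccontr)
    assume "\<not> eventually (\<lambda>x. x \<notin> Q) G"
    then have "eventually (\<lambda>x. x \<in> Q) G"
      using assms(1) unfolding ultrafilter_def by fastforce
    then obtain q where "q \<in> Q" "G \<le> nhds q"
      using ultrafilter_le_nhds_if_compact assms(1) Q by blast
    with Q show False by blast
  qed
qed

section \<open>Condition (ii) and the generators of C_c(X)\<close>

lemma rel_qcompact_subset: "rel_qcompact B \<Longrightarrow> A \<subseteq> B \<Longrightarrow> rel_qcompact A"
  unfolding rel_qcompact_def by blast

lemma rel_qcompact_Un: "rel_qcompact A \<Longrightarrow> rel_qcompact B \<Longrightarrow> rel_qcompact (A \<union> B)"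
  unfolding rel_qcompact_def by (meson Un_mono compact_Un)

lemma summable_on_HX:
  assumes "locally_qc_Hausdorff TYPE('a::topological_space)" "S \<in> HX"
    and "rel_qcompact {x::'a. f x \<noteq> 0}"
  shows "f summable_on S"
proof -
  obtain K where K: "compact K" "{x. f x \<noteq> 0} \<subseteq> K"
    using assms(3) unfolding rel_qcompact_def by blast
  have "{x\<in>S. f x \<noteq> 0} \<subseteq> S \<inter> K"
    using K(2) by blast
  with finite_HX_Int_compact[OF assms(1,2) K(1)] have "finite {x\<in>S. f x \<noteq> 0}"
    by (rule finite_subset[rotated])
  then show ?thesis
    by (rule finite_nonzero_values_imp_summable_on)
qed

definition Cc_HX :: "('a::topological_space \<Rightarrow> complex) set" where
  "Cc_HX = {f. rel_qcompact {x. f x \<noteq> 0} \<and>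
     (\<forall>F S. F \<noteq> bot \<and> S \<in> HX \<and> limitin HX_topology (\<lambda>x. {x}) S F
        \<longrightarrow> (f \<longlongrightarrow> infsum f S) F)}"

lemma Cc_HXI:
  assumes "rel_qcompact {x. f x \<noteq> 0}"
    and "\<And>F S. F \<noteq> bot \<Longrightarrow> S \<in> HX \<Longrightarrow> limitin HX_topology (\<lambda>x. {x}) S F \<Longrightarrow>
           (f \<longlongrightarrow> infsum f S) F"
  shows "f \<in> Cc_HX"
  using assms unfolding Cc_HX_def by blast

lemma Cc_HXD:
  assumes "f \<in> Cc_HX"
  shows "rel_qcompact {x. f x \<noteq> 0}"
    and "F \<noteq> bot \<Longrightarrow> limitin HX_topology (\<lambda>x. {x}) S F \<Longrightarrow> (f \<longlongrightarrow> infsum f S) F"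
  using assms limitin_HX_topology_singletonsD(1) unfolding Cc_HX_def by blast+

lemma Cc_HX_zero: "(\<lambda>x. 0) \<in> Cc_HX"
  by (rule Cc_HXI) (auto simp: rel_qcompact_def)

lemma Cc_HX_add:
  assumes "locally_qc_Hausdorff TYPE('a::topological_space)"
    and f: "f \<in> Cc_HX" and g: "g \<in> (Cc_HX :: ('a \<Rightarrow> complex) set)"
  shows "(\<lambda>x. f x + g x) \<in> Cc_HX"
proof (rule Cc_HXI)
  have "{x. f x + g x \<noteq> 0} \<subseteq> {x. f x \<noteq> 0} \<union> {x. g x \<noteq> 0}"
    by auto
  then show "rel_qcompact {x. f x + g x \<noteq> 0}"
    using Cc_HXD(1)[OF f] Cc_HXD(1)[OF g] by (meson rel_qcompact_Un rel_qcompact_subset)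
next
  fix F :: "'a filter" and S assume F: "F \<noteq> bot" "S \<in> HX" "limitin HX_topology (\<lambda>x. {x}) S F"
  have "infsum (\<lambda>x. f x + g x) S = infsum f S + infsum g S"
    using assms(1) F(2) Cc_HXD(1)[OF f] Cc_HXD(1)[OF g]
    by (intro infsum_add summable_on_HX)
  then show "((\<lambda>x. f x + g x) \<longlongrightarrow> infsum (\<lambda>x. f x + g x) S) F"
    using Cc_HXD(2)[OF f F(1,3)] Cc_HXD(2)[OF g F(1,3)] by (simp add: tendsto_add)
qed

lemma Cc_HX_cmult:
  assumes "f \<in> Cc_HX"
  shows "(\<lambda>x. c * f x) \<in> Cc_HX"
proof (rule Cc_HXI)
  have "{x. c * f x \<noteq> 0} \<subseteq> {x. f x \<noteq> 0}"
    by auto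
  with Cc_HXD(1)[OF assms] show "rel_qcompact {x. c * f x \<noteq> 0}"
    by (rule rel_qcompact_subset)
  show "((\<lambda>x. c * f x) \<longlongrightarrow> infsum (\<lambda>x. c * f x) S) F"
    if "F \<noteq> bot" "S \<in> HX" "limitin HX_topology (\<lambda>x. {x}) S F" for F S
    unfolding infsum_cmult_right' using Cc_HXD(2)[OF assms that(1,3)] by (rule tendsto_mult_left)
qed

lemma Cc_HX_diff:
  assumes "locally_qc_Hausdorff TYPE('a::topological_space)"
    and "f \<in> Cc_HX" "g \<in> (Cc_HX :: ('a \<Rightarrow> complex) set)"
  shows "(\<lambda>x. f x - g x) \<in> Cc_HX"
  using Cc_HX_add[OF assms(1,2) Cc_HX_cmult[OF assms(3), of "-1"]] by simp

lemma Cc_HX_sum: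
  assumes "locally_qc_Hausdorff TYPE('a::topological_space)"
    and "finite I" "\<And>i. i \<in> I \<Longrightarrow> h i \<in> (Cc_HX :: ('a \<Rightarrow> complex) set)"
  shows "(\<lambda>x. \<Sum>i\<in>I. h i x) \<in> Cc_HX"
  using assms(2,3)
proof (induction I rule: finite_induct)
  case empty
  then show ?case using Cc_HX_zero by simp
next
  case (insert i I)
  then show ?case using Cc_HX_add[OF assms(1)] by simp
qed

lemma Cc_generatorE:
  assumes "Cc_generator g"
  obtains V C where "open V" "Hausdorff_space (top_of_set V)" "continuous_on V g"
    "compact C" "C \<subseteq> V" "\<And>x. x \<notin> C \<Longrightarrow> g x = 0"
proof -
  obtain V where V: "open V" "Hausdorff_space (top_of_set V)" "continuous_on V g"
    "compactin (top_of_set V) (top_of_set V closure_of {x\<in>V. g x \<noteq> 0})"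
    "\<And>x. x \<notin> V \<Longrightarrow> g x = 0"
    using assms unfolding Cc_generator_def by blast
  let ?C = "top_of_set V closure_of {x\<in>V. g x \<noteq> 0}"
  have "compact ?C" "?C \<subseteq> V"
    using V(4) by (simp_all add: compactin_subtopology)
  moreover have "{x\<in>V. g x \<noteq> 0} \<subseteq> ?C"
    by (rule closure_of_subset) simp
  then have "g x = 0" if "x \<notin> ?C" for x
    using that V(5) by blast
  ultimately show ?thesis
    using that V(1-3) by blast
qed

lemma Cc_generatorI:
  assumes "open V" "Hausdorff_space (top_of_set V)" "continuous_on V g"
    and "compact C" "C \<subseteq> V" "\<And>x. x \<notin> C \<Longrightarrow> g x = 0"
  shows "Cc_generator g"
  unfolding Cc_generator_def
proof (intro exI[of _ V] conjI allI impI assms(1-3))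
  have "compactin (top_of_set V) C"
    using assms(4,5) by (simp add: compactin_subtopology)
  moreover have "top_of_set V closure_of {x\<in>V. g x \<noteq> 0} \<subseteq> C"
    using assms(6) compactin_imp_closedin[OF assms(2) \<open>compactin (top_of_set V) C\<close>]
    by (intro closure_of_minimal) auto
  moreover have "closedin (top_of_set V) (top_of_set V closure_of {x\<in>V. g x \<noteq> 0})"
    by (rule closedin_closure_of)
  ultimately show "compactin (top_of_set V) (top_of_set V closure_of {x\<in>V. g x \<noteq> 0})"
    by (rule closed_compactin)
  show "g x = 0" if "x \<notin> V" for x
    using that assms(5,6) by blast
qed

lemma rel_qcompact_support_Cc_generator:
  assumes "Cc_generator g"
  shows "rel_qcompact {x. g x \<noteq> 0}"
  using assms unfolding rel_qcompact_def by (elim Cc_generatorE) blast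

lemma Cc_generator_tendsto_infsum:
  assumes "Cc_generator g" "limitin HX_topology (\<lambda>x. {x}) S F"
  shows "(g \<longlongrightarrow> infsum g S) F"
proof -
  obtain V C where V: "open V" "Hausdorff_space (top_of_set V)" "continuous_on V g"
    and C: "compact C" "C \<subseteq> V" "\<And>x. x \<notin> C \<Longrightarrow> g x = 0"
    using Cc_generatorE[OF assms(1)] by blast
  note lim = limitin_HX_topology_singletonsD[OF assms(2)]
  show ?thesis
  proof (cases "S \<inter> V = {}")
    case True
    then have "S \<inter> C = {}"
      using C(2) by blast
    then have "infsum g S = 0"
      using C(3) by (intro infsum_0) blast
    moreover have "eventually (\<lambda>x. x \<notin> C) F"
      using lim(3)[OF C(1) \<open>S \<inter> C = {}\<close>] .
    then have "eventually (\<lambda>x. g x = 0) F"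
      by (rule eventually_mono) (rule C(3))
    ultimately show ?thesis
      by (simp add: tendsto_eventually)
  next
    case False
    then obtain s where s: "s \<in> S \<inter> V" by blast
    have "infsum g S = infsum g {s}"
    proof (rule infsum_cong_neutral)
      fix x assume "x \<in> S - {s}"
      then have "x \<notin> V"
        using HX_Int_open_Hausdorff_subsingleton[OF lim(1) V(1,2) _ s] by blast
      then show "g x = 0"
        using C(2,3) by blast
    qed (use s in auto)
    then have infsum_eq: "infsum g S = g s" by simp
    show ?thesis
      unfolding infsum_eq
    proof (rule topological_tendstoI)
      fix B assume "open B" "g s \<in> B"
      have "open (g -` B \<inter> V)"
        using V(3) \<open>open B\<close> by (simp add: continuous_on_open_vimage[OF V(1)])
      moreover have "S \<inter> (g -` B \<inter> V) \<noteq> {}"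
        using s \<open>g s \<in> B\<close> by blast
      ultimately have "eventually (\<lambda>x. x \<in> g -` B \<inter> V) F"
        by (rule lim(2))
      then show "eventually (\<lambda>x. g x \<in> B) F"
        by (rule eventually_mono) simp
    qed
  qed
qed

lemma Cc_generator_in_Cc_HX: "Cc_generator g \<Longrightarrow> g \<in> Cc_HX"
  by (intro Cc_HXI rel_qcompact_support_Cc_generator Cc_generator_tendsto_infsum)

lemma Cc_subset_Cc_HX:
  assumes "locally_qc_Hausdorff TYPE('a::topological_space)"
  shows "Cc \<subseteq> (Cc_HX :: ('a \<Rightarrow> complex) set)"
proof
  fix f :: "'a \<Rightarrow> complex" assume "f \<in> Cc"
  then obtain n and c :: "nat \<Rightarrow> complex" and g :: "nat \<Rightarrow> 'a \<Rightarrow> complex"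
    where g: "\<forall>i<n. Cc_generator (g i)" and f: "f = (\<lambda>x. \<Sum>i<n. c i * g i x)"
    unfolding Cc_def by auto
  have "(\<lambda>x. \<Sum>i<n. c i * g i x) \<in> Cc_HX"
    using g by (intro Cc_HX_sum[OF assms] Cc_HX_cmult Cc_generator_in_Cc_HX) auto
  then show "f \<in> Cc_HX" by (simp add: f)
qed

section \<open>Condition (ii) implies membership in C_c(X)\<close>

lemma Cc_zero: "(\<lambda>x. 0) \<in> Cc"
  unfolding Cc_def by (rule CollectI, rule exI[of _ 0]) auto

lemma Cc_add_generator:
  assumes "h \<in> Cc" "Cc_generator g"
  shows "(\<lambda>x. h x + g x) \<in> Cc"
proof -
  obtain m and c :: "nat \<Rightarrow> complex" and gs :: "nat \<Rightarrow> 'a \<Rightarrow> complex"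
    where gs: "\<forall>i<m. Cc_generator (gs i)" and h: "h = (\<lambda>x. \<Sum>i<m. c i * gs i x)"
    using assms(1) unfolding Cc_def by auto
  define c' where "c' = c(m := 1)"
  define gs' where "gs' = gs(m := g)"
  have "\<forall>i<Suc m. Cc_generator (gs' i)"
    using gs assms(2) by (auto simp: gs'_def less_Suc_eq)
  moreover have "(\<Sum>i<m. c' i * gs' i x) = (\<Sum>i<m. c i * gs i x)" for x
    by (rule sum.cong) (auto simp: c'_def gs'_def)
  then have "(\<lambda>x. h x + g x) = (\<lambda>x. \<Sum>i<Suc m. c' i * gs' i x)"
    by (simp add: h c'_def gs'_def)
  ultimately show ?thesis
    unfolding Cc_def by blast
qed

lemma Cc_HX_tendsto_at_within_Diff:
  assumes f: "f \<in> Cc_HX" and U: "open U" "Hausdorff_space (top_of_set U)" and "open \<Omega>"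
    and zero: "\<And>x. x \<notin> \<Omega> \<Longrightarrow> x \<notin> U \<Longrightarrow> f x = 0"
    and a: "a \<in> U - \<Omega>"
  shows "(f \<longlongrightarrow> f a) (at a within (U - \<Omega>))"
proof (rule tendsto_ultrafilterI)
  fix G assume G: "ultrafilter G" "G \<le> at a within (U - \<Omega>)"
  define S where "S = {s. G \<le> nhds s}"
  have "G \<le> nhds a"
    using G(2) by (simp add: at_within_def le_inf_iff)
  then have S: "S \<in> HX" "limitin HX_topology (\<lambda>x. {x}) S G" "a \<in> S"
    unfolding S_def
    using ultrafilter_limits_in_HX[OF G(1)] ultrafilter_limitin_HX_topology[OF G(1)] by simp_all
  have "eventually (\<lambda>x. x \<in> U - \<Omega>) (at a within (U - \<Omega>))"
    by (simp add: eventually_at_filter)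
  then have in_Diff: "eventually (\<lambda>x. x \<in> U - \<Omega>) G"
    by (rule filter_leD[OF G(2)])
  have "f s = 0" if s: "s \<in> S" "s \<noteq> a" for s
  proof -
    have "s \<notin> U"
      using HX_Int_open_Hausdorff_subsingleton[OF S(1) U, of s a] s S(3) a by blast
    moreover have "s \<notin> \<Omega>"
    proof
      assume "s \<in> \<Omega>"
      moreover have "G \<le> nhds s"
        using s(1) by (simp add: S_def)
      ultimately have "eventually (\<lambda>x. x \<in> \<Omega>) G"
        using \<open>open \<Omega>\<close> unfolding le_nhds by blast
      with in_Diff have "eventually (\<lambda>x. False) G"
        by (rule eventually_elim2) simp
      with G(1) show False
        by (simp add: ultrafilter_def)
    qed
    ultimately show ?thesis
      by (rule zero[rotated])
  qed
  then have "infsum f S = infsum f {a}"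
    using S(3) by (intro infsum_cong_neutral) auto
  moreover have "(f \<longlongrightarrow> infsum f S) G"
    using Cc_HXD(2)[OF f _ S(2)] G(1) by (simp add: ultrafilter_def)
  ultimately show "(f \<longlongrightarrow> f a) G"
    by simp
qed

lemma Cc_HX_continuous_on_Diff:
  assumes "f \<in> Cc_HX" "open U" "Hausdorff_space (top_of_set U)" "open \<Omega>"
    and "\<And>x. x \<notin> \<Omega> \<Longrightarrow> x \<notin> U \<Longrightarrow> f x = 0"
  shows "continuous_on (U - \<Omega>) f"
  unfolding continuous_on_def using Cc_HX_tendsto_at_within_Diff[OF assms] by blast

lemma Cc_HX_Tietze_extension:
  fixes f :: "'a::topological_space \<Rightarrow> complex"
  assumes f: "f \<in> Cc_HX"
    and UK: "open U" "U \<subseteq> K" "compact K" "Hausdorff_space (top_of_set K)"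
    and WC: "open W" "W \<subseteq> C" "C \<subseteq> U" "compact C"
    and \<Omega>: "open \<Omega>" "\<And>x. x \<notin> \<Omega> \<Longrightarrow> x \<notin> W \<Longrightarrow> f x = 0"
  obtains e where "continuous_on K e"
    "\<And>x. x \<in> C - \<Omega> \<Longrightarrow> e x = f x" "\<And>x. x \<in> K - W \<Longrightarrow> e x = 0"
proof -
  let ?X = "top_of_set K"
  define d where "d x = (if x \<in> W then f x else 0)" for x
  have CK: "C \<subseteq> K"
    using WC(3) UK(2) by (rule order_trans)
  have "compactin ?X C"
    using WC(4) CK by (simp add: compactin_subtopology)
  with UK(4) have "closedin ?X C"
    by (rule compactin_imp_closedin)
  moreover have "closedin ?X (K \<inter> - \<Omega>)"
    using \<Omega>(1) by (intro closedin_closed_Int) auto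
  ultimately have "closedin ?X (C \<inter> (K \<inter> - \<Omega>))"
    by (rule closedin_Int)
  moreover have "C \<inter> (K \<inter> - \<Omega>) = C - \<Omega>"
    using CK by blast
  ultimately have closed1: "closedin ?X (C - \<Omega>)"
    by simp
  have "closedin ?X (K \<inter> - W)"
    using WC(1) by (intro closedin_closed_Int) auto
  moreover have "K \<inter> - W = K - W"
    by blast
  ultimately have closed2: "closedin ?X (K - W)"
    by simp
  have "continuous_on (U - \<Omega>) f"
    using Cc_HX_continuous_on_Diff[OF f UK(1) _ \<Omega>(1)] Hausdorff_space_subtopology_subset[OF UK(4,2)]
      \<Omega>(2) WC(2,3) by blast
  then have "continuous_on (C - \<Omega>) f"
    by (rule continuous_on_subset) (use WC(3) in blast)
  then have cont1: "continuous_on (C - \<Omega>) d"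
    by (rule continuous_on_eq) (use \<Omega>(2) in \<open>auto simp: d_def\<close>)
  have cont2: "continuous_on (K - W) d"
    by (rule continuous_on_eq[OF continuous_on_const]) (simp add: d_def)
  have "continuous_on ((C - \<Omega>) \<union> (K - W)) d"
    using closed1 closed2 CK
    by (intro continuous_on_Un_local cont1 cont2) (auto intro: closedin_subset_trans)
  moreover have "(C - \<Omega>) \<union> (K - W) \<subseteq> K"
    using CK by blast
  ultimately have "continuous_map (subtopology ?X ((C - \<Omega>) \<union> (K - W))) euclidean d"
    by (simp add: subtopology_subtopology Int_absorb1)
  moreover have "normal_space ?X"
    using UK(3,4) by (intro compact_Hausdorff_or_regular_imp_normal_space)
      (auto simp: compact_space_subtopology)
  moreover have "closedin ?X ((C - \<Omega>) \<union> (K - W))"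
    using closed1 closed2 by (rule closedin_Un)
  ultimately obtain e where "continuous_map ?X euclidean e"
    "\<And>x. x \<in> (C - \<Omega>) \<union> (K - W) \<Longrightarrow> e x = d x"
    using Tietze_extension_complex by blast
  moreover have "d x = f x" if "x \<in> C - \<Omega>" for x
    using that \<Omega>(2) by (simp add: d_def)
  ultimately show ?thesis
    using that by (simp add: d_def)
qed

lemma Cc_HX_ex_generator_eq_outside_open:
  fixes f :: "'a::topological_space \<Rightarrow> complex"
  assumes f: "f \<in> Cc_HX"
    and UK: "open U" "U \<subseteq> K" "compact K" "Hausdorff_space (top_of_set K)"
    and WC: "open W" "W \<subseteq> C" "C \<subseteq> U" "compact C"
    and \<Omega>: "open \<Omega>" "\<And>x. x \<notin> \<Omega> \<Longrightarrow> x \<notin> W \<Longrightarrow> f x = 0"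
  obtains g where "Cc_generator g" "\<And>x. x \<notin> \<Omega> \<Longrightarrow> g x = f x"
proof -
  obtain e where e: "continuous_on K e"
    "\<And>x. x \<in> C - \<Omega> \<Longrightarrow> e x = f x" "\<And>x. x \<in> K - W \<Longrightarrow> e x = 0"
    using Cc_HX_Tietze_extension[OF assms] by blast
  define g where "g x = (if x \<in> W then e x else 0)" for x
  have "g x = e x" if "x \<in> K" for x
    using that e(3) by (simp add: g_def)
  then have "continuous_on U g"
    using continuous_on_subset[OF e(1) UK(2)] UK(2) by (metis continuous_on_eq subsetD)
  moreover have "g x = 0" if "x \<notin> C" for x
    using that WC(2) by (auto simp: g_def)
  ultimately have "Cc_generator g"
    using Hausdorff_space_subtopology_subset[OF UK(4,2)]
    by (intro Cc_generatorI[OF UK(1) _ _ WC(4,3)])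
  moreover have "g x = f x" if "x \<notin> \<Omega>" for x
    using that e(2) WC(2) \<Omega>(2) by (auto simp: g_def)
  ultimately show ?thesis
    using that by blast
qed

lemma Cc_HX_in_Cc_if_support_covered:
  fixes f :: "'a::topological_space \<Rightarrow> complex"
  assumes "locally_qc_Hausdorff TYPE('a)"
    and "finite I"
    and "\<And>i. i \<in> I \<Longrightarrow>
           open (U i) \<and> U i \<subseteq> K i \<and> compact (K i) \<and> Hausdorff_space (top_of_set (K i))"
    and "compact M" "M \<subseteq> \<Union>(U ` I)" "{x. f x \<noteq> 0} \<subseteq> M" "f \<in> Cc_HX"
  shows "f \<in> Cc"
  using assms(2-7)
proof (induction I arbitrary: f M rule: finite_induct)
  case empty
  then have "f = (\<lambda>x. 0)" by auto
  then show ?case using Cc_zero by simp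
next
  case (insert i I)
  note UK = insert.prems(1)
  have nbhd: "\<exists>N L. open N \<and> y \<in> N \<and> N \<subseteq> L \<and> L \<subseteq> U j \<and> compact L"
    if "j \<in> insert i I" "y \<in> U j" for j y
    using UK[OF that(1)] that(2) by (intro compact_neighbourhood_within_open[where K = "K j"]) auto
  obtain W C where W: "\<And>j. open (W j)" "\<And>j. W j \<subseteq> C j" "\<And>j. C j \<subseteq> U j"
    "\<And>j. compact (C j)" "M \<subseteq> \<Union>(W ` insert i I)"
    using compact_shrink_open_cover[OF insert.prems(2,3) nbhd] by blast
  define \<Omega> where "\<Omega> = \<Union>(W ` I)"
  have "open \<Omega>"
    unfolding \<Omega>_def by (intro open_UN ballI W(1))
  have zero: "f x = 0" if "x \<notin> \<Omega>" "x \<notin> W i" for x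
    using that insert.prems(4) W(5) unfolding \<Omega>_def by blast
  have Ui: "open (U i)" "U i \<subseteq> K i" "compact (K i)" "Hausdorff_space (top_of_set (K i))"
    using UK[of i] by simp_all
  obtain g where g: "Cc_generator g" "\<And>x. x \<notin> \<Omega> \<Longrightarrow> g x = f x"
    using Cc_HX_ex_generator_eq_outside_open[OF insert.prems(5) Ui W(1-4) \<open>open \<Omega>\<close> zero]
    by blast
  have "compact (\<Union>(C ` I))"
    using insert.hyps(1) W(4) by (intro compact_UN) auto
  moreover have "\<Union>(C ` I) \<subseteq> \<Union>(U ` I)"
    using W(3) by blast
  moreover have "{x. f x - g x \<noteq> 0} \<subseteq> \<Union>(C ` I)"
    using g(2) W(2) unfolding \<Omega>_def by fastforce
  moreover have "(\<lambda>x. f x - g x) \<in> Cc_HX"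
    using Cc_HX_diff[OF assms(1) insert.prems(5) Cc_generator_in_Cc_HX[OF g(1)]] .
  ultimately have "(\<lambda>x. f x - g x) \<in> Cc"
    by (intro insert.IH) (use UK in auto)
  then have "(\<lambda>x. (f x - g x) + g x) \<in> Cc"
    using g(1) by (rule Cc_add_generator)
  then show ?case by simp
qed

lemma Cc_HX_subset_Cc:
  assumes "locally_qc_Hausdorff TYPE('a::topological_space)"
  shows "Cc_HX \<subseteq> (Cc :: ('a \<Rightarrow> complex) set)"
proof
  fix f :: "'a \<Rightarrow> complex" assume f: "f \<in> Cc_HX"
  obtain M where M: "compact M" "{x. f x \<noteq> 0} \<subseteq> M"
    using Cc_HXD(1)[OF f] unfolding rel_qcompact_def by blast
  obtain U K :: "'a \<Rightarrow> 'a set" where UK: "\<And>x. open (U x)" "\<And>x. x \<in> U x" "\<And>x. U x \<subseteq> K x"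
    "\<And>x. compact (K x)" "\<And>x. Hausdorff_space (top_of_set (K x))"
    using locally_qc_HausdorffE[OF assms] by metis
  obtain T where T: "finite T" "M \<subseteq> \<Union>(U ` T)"
    using compactE_image[OF M(1), of M U] UK(1,2) by (metis UN_I subsetI)
  show "f \<in> Cc"
    using Cc_HX_in_Cc_if_support_covered[OF assms T(1) _ M(1) T(2) M(2) f] UK by blast
qed

theorem proposition4p1:
  fixes f :: "'a::topological_space \<Rightarrow> complex"
  assumes "locally_qc_Hausdorff TYPE('a)"
  shows "f \<in> Cc \<longleftrightarrow>
           (rel_qcompact {x. f x \<noteq> 0} \<and>
            (\<forall>(F::'a filter) S. F \<noteq> bot \<and> S \<in> HX \<and> limitin HX_topology (\<lambda>x. {x}) S F
                \<longrightarrow> (f \<longlongrightarrow> infsum f S) F))"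
proof -
  have "f \<in> Cc \<longleftrightarrow> f \<in> Cc_HX"
    using Cc_subset_Cc_HX[OF assms] Cc_HX_subset_Cc[OF assms] by blast
  then show ?thesis
    by (simp add: Cc_HX_def)
qed

end
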